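(* Let $\gamma$ be a Jordan curve in $\mathbb{R}^2$ of bounded convex curvature. Then there exists a constant $\eta>0$ such that whenever $B(x,r)\subset\operatorname{Int}\gamma$ is an open disk of radius $r$ and $\partial B(x,r)$ meets $\gamma$ in at least two points, we have $r\ge\eta$.
   Context: $\operatorname{Int}\gamma$ is the bounded component of $\mathbb{R}^2\setminus\gamma$; $B(x,r)$ is the open disk of center $x$ and radius $r$. A Jordan curve $\gamma$ has bounded convex curvature if for every $x\in\gamma$ there exist an open disk $U_x$ of radius $1$ and $\varepsilon_x>0$ with $x\in\partial U_x$ and $B(x,\varepsilon_x)\cap U_x\subset\operatorname{Int}\gamma$. *)

theory Defs
  imports "HOL-Analysis.Analysis"
begin

text \<open>The plane R^2 is modelled by the type complex. A Jordan curve is the image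
of a closed simple path (a continuous map [0,1] -> R^2, injective except at endpoints).\<close>

definition jordan_curve :: "(real \<Rightarrow> complex) \<Rightarrow> bool" where
  "jordan_curve g \<longleftrightarrow> simple_path g \<and> pathfinish g = pathstart g"

definition Int_curve :: "(real \<Rightarrow> complex) \<Rightarrow> complex set" where
  "Int_curve g = inside (path_image g)"

definition bounded_convex_curvature :: "(real \<Rightarrow> complex) \<Rightarrow> bool" where
  "bounded_convex_curvature g \<longleftrightarrow>
     (\<forall>x\<in>path_image g. \<exists>c. \<exists>\<epsilon>>0. x \<in> frontier (ball c 1) \<and>
         ball x \<epsilon> \<inter> ball c 1 \<subseteq> Int_curve g)"

end

theory Submission
  imports Defs "HOL-Complex_Analysis.Contour_Integration"
begin

text \<open>
  If a disc \<open>B(x,r)\<close> inside the curve touches it at two points, some arc of its boundary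
  circle joins two curve points through the interior: the whole circle cannot lie on the curve,
  for then the connected interior would be the disc, while the unit interior disc at a point of
  the circle leaves it. By the theta-curve theorem this arc cuts the interior into two pockets,
  each bounded by the arc and one of the two curve arcs between its endpoints. Each curve arc
  reaches distance \<open>1\<close> from \<open>x\<close>: otherwise its pocket lies in the disc about \<open>x\<close> through the
  farthest point \<open>m\<close> of the arc, the unit interior disc at \<open>m\<close> sticks out of that smaller disc,
  and so points of the other pocket accumulate at \<open>m\<close>, which is not on its boundary. On the
  other hand, by uniform continuity and injectivity of the parametrisation, two curve points
  closer than some \<open>\<eta>\<close> cut off an arc lying within \<open>1/2\<close> of them; so \<open>2r \<ge> \<eta>\<close> once \<open>r < 1/2\<close>.
\<close>

definition interior_ball_condition :: "real \<Rightarrow> 'a::metric_space set \<Rightarrow> 'a \<Rightarrow> bool" where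
  "interior_ball_condition R U m \<longleftrightarrow> (\<exists>c \<epsilon>. 0 < \<epsilon> \<and> m \<in> sphere c R \<and> ball m \<epsilon> \<inter> ball c R \<subseteq> U)"

lemma bounded_convex_curvature_iff:
  "bounded_convex_curvature g \<longleftrightarrow>
     (\<forall>m\<in>path_image g. interior_ball_condition 1 (inside (path_image g)) m)"
  by (auto simp: bounded_convex_curvature_def interior_ball_condition_def Int_curve_def)

lemma inside_subset_convex:
  fixes S T :: "'a::{real_normed_vector, perfect_space} set"
  assumes "convex T" "S \<subseteq> T"
  shows "inside S \<subseteq> T"
  using outside_subset_convex[OF assms] inside_Int_outside by blast

lemma cball_diff_subset_inside:
  fixes S :: "'a::real_normed_vector set"
  assumes "closed S" "0 < r" "ball x r \<subseteq> inside S"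
  shows "cball x r - S \<subseteq> inside S"
proof -
  have "cball x r \<subseteq> closure (inside S)"
    using closure_mono[OF assms(3)] assms(2) by simp
  then show ?thesis
    using closure_inside_subset[OF assms(1)] by blast
qed

lemma arc_image_diff_ends_nonempty:
  assumes "arc g"
  shows "path_image g - {pathstart g, pathfinish g} \<noteq> {}"
proof -
  have "g (1/2) \<notin> {g 0, g 1}"
    using assms by (auto simp: arc_def dest: inj_onD)
  moreover have "g (1/2) \<in> path_image g" by (simp add: path_image_def)
  ultimately show ?thesis by (auto simp: pathstart_def pathfinish_def)
qed

lemma norm_add_power2:
  fixes a b :: "'a::real_inner"
  shows "(norm (a + b))\<^sup>2 = (norm a)\<^sup>2 + 2 * inner a b + (norm b)\<^sup>2"
  by (simp add: power2_norm_eq_inner inner_add_left inner_add_right inner_commute)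

text \<open>Two discs through \<open>0\<close>, of radii \<open>R > \<rho>\<close> and centres \<open>-R u\<close> and \<open>-n\<close>;
  \<open>\<tau>\<close> is a unit tangent at \<open>0\<close> pointing away from the centre \<open>-n\<close>.\<close>

lemma escape_step_into_larger_ball:
  fixes u \<tau> n :: "'a::real_inner"
  assumes u: "norm u = 1" and \<tau>: "norm \<tau> = 1" "inner u \<tau> = 0" "0 \<le> inner n \<tau>"
    and n: "norm n = \<rho>" and \<rho>: "0 < \<rho>" "\<rho> < R" and e: "0 < e"
  obtains v where "norm v < e" "norm (R *\<^sub>R u + v) < R" "\<rho> < norm (n + v)"
proof -
  have R: "0 < R" using \<rho> by linarith
  have inu: "inner n u \<le> \<rho>" using norm_cauchy_schwarz[of n u] u n by simp
  have \<tau>\<tau>: "inner \<tau> \<tau> = 1" and uu: "inner u u = 1"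
    using \<tau>(1) u by (simp_all add: dot_square_norm)
  \<comment> \<open>Step \<open>s\<close> along \<open>\<tau>\<close> and \<open>k s\<^sup>2\<close> towards \<open>-R u\<close>: as \<open>1/(2R) < k < 1/(2\<rho>)\<close>,
      this enters the larger disc but leaves the smaller one.\<close>
  define k where "k = 1 / (R + \<rho>)"
  define s where "s = min (e / 2) (R - \<rho>)"
  have s: "0 < s" "s \<le> e / 2" "s \<le> R - \<rho>" using \<rho> e by (auto simp: s_def min_def)
  have k: "0 < k" "2 * k * R - 1 = (R - \<rho>) / (R + \<rho>)" "1 - 2 * k * \<rho> = (R - \<rho>) / (R + \<rho>)"
    using \<rho> by (auto simp: k_def field_simps)
  have ks_le: "k * s \<le> (R - \<rho>) / (R + \<rho>)"
    using s(3) \<rho> by (simp add: k_def divide_right_mono)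
  moreover have "(R - \<rho>) / (R + \<rho>) < 1" using \<rho> by simp
  ultimately have ks: "0 < k * s" "k * s < 1" using k(1) s(1) by auto
  then have "(k * s)\<^sup>2 < k * s"
    using mult_strict_left_mono[OF ks(2) ks(1)] by (simp add: power2_eq_square)
  with ks_le have ks2: "(k * s)\<^sup>2 < (R - \<rho>) / (R + \<rho>)" by linarith
  define v where "v = s *\<^sub>R \<tau> - (k * s\<^sup>2) *\<^sub>R u"
  have nv: "(norm v)\<^sup>2 = s\<^sup>2 + (k * s\<^sup>2)\<^sup>2"
    unfolding power2_norm_eq_inner
    by (simp add: v_def inner_diff_left inner_diff_right \<tau>(2) inner_commute[of \<tau> u] \<tau>\<tau> uu power2_eq_square)
  have uv: "inner u v = - k * s\<^sup>2"
    by (simp add: v_def inner_diff_right \<tau>(2) uu)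
  have nv_ge: "inner n v \<ge> - k * s\<^sup>2 * \<rho>"
  proof -
    have "inner n v = s * inner n \<tau> - k * s\<^sup>2 * inner n u"
      by (simp add: v_def inner_diff_right)
    moreover have "k * s\<^sup>2 * inner n u \<le> k * s\<^sup>2 * \<rho>"
      using inu k by (intro mult_left_mono) auto
    moreover have "0 \<le> s * inner n \<tau>" using \<tau>(3) s(1) by simp
    ultimately show ?thesis by linarith
  qed
  have "(norm (R *\<^sub>R u + v))\<^sup>2 = R\<^sup>2 - s\<^sup>2 * (2 * k * R - 1 - (k * s)\<^sup>2)"
    unfolding norm_add_power2 nv using R by (simp add: u uv power2_eq_square algebra_simps)
  moreover have "0 < s\<^sup>2 * (2 * k * R - 1 - (k * s)\<^sup>2)"
    using ks2 k(2) s(1) by simp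
  ultimately have "norm (R *\<^sub>R u + v) < R"
    using R by (simp add: power2_less_imp_less)
  moreover have "\<rho> < norm (n + v)"
  proof -
    have "s\<^sup>2 * (1 - 2 * k * \<rho>) = s\<^sup>2 + 2 * (- k * s\<^sup>2 * \<rho>)" by (simp add: algebra_simps)
    then have "\<rho>\<^sup>2 + s\<^sup>2 * (1 - 2 * k * \<rho>) \<le> (norm (n + v))\<^sup>2"
      unfolding norm_add_power2 nv n using nv_ge zero_le_power2[of "k * s\<^sup>2"] by linarith
    moreover have "0 < s\<^sup>2 * (1 - 2 * k * \<rho>)"
      using k(3) \<rho> s(1) by simp
    ultimately show ?thesis
      using \<rho> by (simp add: power2_less_imp_less)
  qed
  moreover have "norm v < e"
  proof -
    have "norm v \<le> s + k * s\<^sup>2"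
      using norm_triangle_ineq4[of "s *\<^sub>R \<tau>" "(k * s\<^sup>2) *\<^sub>R u"] s(1) k(1) by (simp add: v_def \<tau>(1) u)
    also have "\<dots> = s * (1 + k * s)" by (simp add: power2_eq_square algebra_simps)
    also have "\<dots> < s * 2" using ks(2) s(1) by simp
    finally show ?thesis using s(2) by simp
  qed
  ultimately show ?thesis using that by blast
qed

lemma ball_Int_ball_not_subset_smaller_cball:
  fixes c x m :: complex
  assumes m: "m \<in> sphere c R" "m \<in> sphere x \<rho>" and \<rho>: "0 < \<rho>" "\<rho> < R" and e: "0 < e"
  shows "\<not> ball m e \<inter> ball c R \<subseteq> cball x \<rho>"
proof -
  define u where "u = (m - c) / of_real R"
  define n where "n = m - x"
  have R: "0 < R" using \<rho> by linarith
  have mc: "m - c = R *\<^sub>R u" using R by (simp add: u_def scaleR_conv_of_real)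
  have u: "norm u = 1" using m(1) R by (simp add: u_def dist_norm norm_divide norm_minus_commute)
  have n: "norm n = \<rho>" using m(2) by (simp add: n_def dist_norm norm_minus_commute)
  define \<tau> where "\<tau> = (if 0 \<le> inner n (\<i> * u) then \<i> * u else - (\<i> * u))"
  have \<tau>: "norm \<tau> = 1" "inner u \<tau> = 0" "0 \<le> inner n \<tau>"
    by (auto simp: \<tau>_def norm_mult u inner_complex_def)
  obtain v where v: "norm v < e" "norm (R *\<^sub>R u + v) < R" "\<rho> < norm (n + v)"
    using escape_step_into_larger_ball[OF u \<tau> n \<rho> e] .
  have "m + v \<in> ball m e \<inter> ball c R"
    using v(1,2) by (simp add: dist_norm flip: mc) (simp add: norm_minus_commute algebra_simps)
  moreover have "m + v \<notin> cball x \<rho>"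
    using v(3) by (simp add: dist_norm n_def norm_minus_commute algebra_simps)
  ultimately show ?thesis by blast
qed

lemma interior_ball_condition_closure_diff_cball:
  fixes U :: "complex set"
  assumes "interior_ball_condition R U m" "m \<in> sphere x \<rho>" "0 < \<rho>" "\<rho> < R"
  shows "m \<in> closure (U - cball x \<rho>)"
  unfolding closure_approachable
proof (intro allI impI)
  fix e :: real assume "0 < e"
  obtain c \<epsilon> where c: "0 < \<epsilon>" "m \<in> sphere c R" "ball m \<epsilon> \<inter> ball c R \<subseteq> U"
    using assms(1) by (auto simp: interior_ball_condition_def)
  have "\<not> ball m (min e \<epsilon>) \<inter> ball c R \<subseteq> cball x \<rho>"
    using c assms(2-4) \<open>0 < e\<close> by (intro ball_Int_ball_not_subset_smaller_cball) auto
  then obtain y where "y \<in> ball m (min e \<epsilon>) \<inter> ball c R" "y \<notin> cball x \<rho>"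
    by blast
  then show "\<exists>y\<in>U - cball x \<rho>. dist y m < e"
    using c(3) by (intro bexI[of _ y]) (auto simp: dist_commute)
qed

lemma sphere_not_subset_Jordan_curve:
  fixes g :: "real \<Rightarrow> complex"
  assumes g: "simple_path g" "pathfinish g = pathstart g"
    and r: "0 < r" "r < R" and ball: "ball x r \<subseteq> inside (path_image g)"
    and curv: "\<forall>m\<in>path_image g. interior_ball_condition R (inside (path_image g)) m"
  shows "\<not> sphere x r \<subseteq> path_image g"
proof
  assume sphere: "sphere x r \<subseteq> path_image g"
  have "x + of_real r \<in> sphere x r" using r by (simp add: dist_norm)
  then have "x + of_real r \<in> closure (inside (path_image g) - cball x r)"
    using curv sphere r by (intro interior_ball_condition_closure_diff_cball) auto
  then obtain y where "y \<in> inside (path_image g)" "y \<notin> cball x r"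
    by (metis Diff_iff closure_empty empty_iff ex_in_conv)
  \<comment> \<open>The connected inside would have to cross the sphere, which lies on the curve.\<close>
  moreover have "x \<in> inside (path_image g) \<inter> ball x r" using ball r by auto
  ultimately have "inside (path_image g) \<inter> frontier (ball x r) \<noteq> {}"
    using Jordan_inside_outside[OF g] by (intro connected_Int_frontier) auto
  then show False
    using sphere r inside_no_overlap[of "path_image g"] by (auto simp del: inside_no_overlap)
qed

section \<open>Arcs of a circle\<close>

lemma sphere_point_cis:
  fixes x z :: complex
  assumes "z \<in> sphere x r"
  shows "\<exists>\<theta>\<in>{\<theta>0..<\<theta>0 + 2*pi}. z = x + r * cis \<theta>"
proof -
  define w where "w = (z - x) / cis \<theta>0"
  have "norm w = r" using assms by (simp add: w_def norm_divide dist_norm norm_minus_commute)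
  then have "w = r * cis (Arg2pi w)"
    using Arg2pi[of w] by (simp add: is_Arg_def cis_conv_exp)
  then have "z = x + r * cis (\<theta>0 + Arg2pi w)"
    by (simp add: w_def field_simps flip: cis_mult)
  then show ?thesis
    using Arg2pi[of w] by (intro bexI[of _ "\<theta>0 + Arg2pi w"]) auto
qed

lemma continuous_first_last_hit:
  fixes f :: "real \<Rightarrow> 'a::topological_space"
  assumes f: "continuous_on {c..d} f" and S: "closed S"
    and uv: "u \<in> {c..d}" "v \<in> {c..d}" "u \<noteq> v" "f u \<in> S" "f v \<in> S"
  obtains a b where "c \<le> a" "a < b" "b \<le> d" "f a \<in> S" "f b \<in> S"
    "\<And>\<theta>. \<lbrakk>\<theta> \<in> {c..d}; f \<theta> \<in> S\<rbrakk> \<Longrightarrow> a \<le> \<theta> \<and> \<theta> \<le> b"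
proof -
  define T where "T = {c..d} \<inter> f -` S"
  have "closed T"
    unfolding T_def by (rule continuous_closed_preimage[OF f closed_real_atLeastAtMost S])
  then have "compact T"
    by (simp add: compact_eq_bounded_closed T_def bounded_Int)
  moreover have "u \<in> T" "v \<in> T" using uv by (auto simp: T_def)
  ultimately obtain a b where a: "a \<in> T" "\<And>\<theta>. \<theta> \<in> T \<Longrightarrow> a \<le> \<theta>"
      and b: "b \<in> T" "\<And>\<theta>. \<theta> \<in> T \<Longrightarrow> \<theta> \<le> b"
    using compact_attains_inf[of T] compact_attains_sup[of T] by blast
  have "a < b"
    using a(2)[OF \<open>u \<in> T\<close>] a(2)[OF \<open>v \<in> T\<close>] b(2)[OF \<open>u \<in> T\<close>] b(2)[OF \<open>v \<in> T\<close>] uv(3) by linarith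
  then show ?thesis
    using that a b by (auto simp: T_def)
qed

lemma sphere_arc_between_points:
  fixes S :: "complex set"
  assumes S: "closed S" and r: "0 < r"
    and pq: "p \<in> sphere x r \<inter> S" "q \<in> sphere x r \<inter> S" "p \<noteq> q" and w: "w \<in> sphere x r - S"
  obtains \<alpha> where "arc \<alpha>" "path_image \<alpha> \<subseteq> sphere x r" "path_image \<alpha> \<inter> S = {pathstart \<alpha>, pathfinish \<alpha>}"
proof -
  define e where "e = (\<lambda>\<theta>. x + r * cis \<theta>)"
  have e_periodic: "e (\<theta> + 2*pi) = e \<theta>" for \<theta>
    by (simp add: e_def flip: cis_mult)
  obtain \<theta>0 where w_eq: "w = e \<theta>0"
    using sphere_point_cis[of w x r 0] w by (auto simp: e_def)
  obtain \<theta>p \<theta>q where "\<theta>p \<in> {\<theta>0..<\<theta>0 + 2*pi}" "p = e \<theta>p" "\<theta>q \<in> {\<theta>0..<\<theta>0 + 2*pi}" "q = e \<theta>q"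
    using sphere_point_cis[of p x r \<theta>0] sphere_point_cis[of q x r \<theta>0] pq by (auto simp: e_def)
  \<comment> \<open>Starting from \<open>w\<close>, the wanted arc runs from the last hit of \<open>S\<close> in one turn once around to the first.\<close>
  moreover have "continuous_on {\<theta>0..\<theta>0 + 2*pi} e"
    unfolding e_def cis_conv_exp by (intro continuous_intros)
  ultimately obtain a b where ab: "\<theta>0 \<le> a" "a < b" "b \<le> \<theta>0 + 2*pi" "e a \<in> S" "e b \<in> S"
      and first_last: "\<And>\<theta>. \<lbrakk>\<theta> \<in> {\<theta>0..\<theta>0 + 2*pi}; e \<theta> \<in> S\<rbrakk> \<Longrightarrow> a \<le> \<theta> \<and> \<theta> \<le> b"
    using continuous_first_last_hit[of "\<theta>0" "\<theta>0 + 2*pi" e S \<theta>p \<theta>q] S pq by auto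
  have "a \<noteq> \<theta>0" "b \<noteq> \<theta>0 + 2*pi"
    using w w_eq e_periodic[of \<theta>0] ab(4,5) by auto
  define \<alpha> where "\<alpha> = part_circlepath x r b (a + 2*pi)"
  have "arc \<alpha>"
    unfolding \<alpha>_def using ab r \<open>a \<noteq> \<theta>0\<close> \<open>b \<noteq> \<theta>0 + 2*pi\<close> by (intro arc_part_circlepath) auto
  have img: "path_image \<alpha> = e ` {b..a + 2*pi}"
    using ab by (simp add: \<alpha>_def e_def path_image_part_circlepath' closed_segment_eq_real_ivl)
  have ends: "pathstart \<alpha> = e b" "pathfinish \<alpha> = e a"
    using e_periodic[of a] by (simp_all add: \<alpha>_def e_def cis_conv_exp)
  have "path_image \<alpha> \<inter> S \<subseteq> {pathstart \<alpha>, pathfinish \<alpha>}"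
  proof
    fix z assume "z \<in> path_image \<alpha> \<inter> S"
    then obtain \<phi> where \<phi>: "b \<le> \<phi>" "\<phi> \<le> a + 2*pi" "e \<phi> \<in> S" "z = e \<phi>"
      by (auto simp: img)
    show "z \<in> {pathstart \<alpha>, pathfinish \<alpha>}"
    proof (cases "\<phi> \<le> \<theta>0 + 2*pi")
      case True
      then have "\<phi> = b" using first_last[of \<phi>] \<phi> ab by auto
      then show ?thesis using \<phi>(4) ends by simp
    next
      case False
      then have "\<phi> - 2*pi = a"
        using first_last[of "\<phi> - 2*pi"] \<phi> ab e_periodic[of "\<phi> - 2*pi"] by auto
      then show ?thesis using \<phi>(4) ends e_periodic[of a] by auto
    qed
  qed
  moreover have "{pathstart \<alpha>, pathfinish \<alpha>} \<subseteq> S"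
    using ab ends by auto
  moreover have "path_image \<alpha> \<subseteq> sphere x r"
    using ab r by (simp add: \<alpha>_def path_image_part_circlepath_subset)
  ultimately show ?thesis
    using that \<open>arc \<alpha>\<close> by blast
qed

section \<open>Splitting a closed simple path\<close>

lemma image_shiftpath_atLeastAtMost:
  assumes g: "pathfinish g = pathstart g" and st: "0 \<le> s" "s \<le> t" "t \<le> 1"
  shows "shiftpath s g ` {t - s..1} = g ` ({t..1} \<union> {0..s})"
proof
  show "shiftpath s g ` {t - s..1} \<subseteq> g ` ({t..1} \<union> {0..s})"
  proof
    fix z assume "z \<in> shiftpath s g ` {t - s..1}"
    then obtain v where v: "t - s \<le> v" "v \<le> 1" "z = shiftpath s g v" by auto
    show "z \<in> g ` ({t..1} \<union> {0..s})"
    proof (cases "s + v \<le> 1")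
      case True
      then show ?thesis using v by (intro image_eqI[of _ _ "s + v"]) (auto simp: shiftpath_def)
    next
      case False
      then show ?thesis using v by (intro image_eqI[of _ _ "s + v - 1"]) (auto simp: shiftpath_def)
    qed
  qed
  have g10: "g 1 = g 0" using g by (simp add: pathstart_def pathfinish_def)
  have "g u \<in> shiftpath s g ` {t - s..1}" if u: "u \<in> {t..1} \<union> {0..s}" for u
  proof (cases "u \<in> {t..1}")
    case True
    then show ?thesis using st by (intro image_eqI[of _ _ "u - s"]) (auto simp: shiftpath_def)
  next
    case False
    then have u: "0 \<le> u" "u \<le> s" using u by auto
    have "shiftpath s g (u + 1 - s) = g u"
      using u g10 by (cases "u = 0") (auto simp: shiftpath_def)
    then show ?thesis using u st by (intro image_eqI[of _ _ "u + 1 - s"]) auto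
  qed
  then show "g ` ({t..1} \<union> {0..s}) \<subseteq> shiftpath s g ` {t - s..1}" by blast
qed

lemma closed_simple_path_split:
  fixes g :: "real \<Rightarrow> 'a::real_normed_vector"
  assumes g: "simple_path g" "pathfinish g = pathstart g"
    and st: "0 \<le> s" "s < t" "t \<le> 1" "g s \<noteq> g t"
  obtains c1 c2 where
    "simple_path c1" "pathstart c1 = g s" "pathfinish c1 = g t" "path_image c1 = g ` {s..t}"
    "simple_path c2" "pathstart c2 = g s" "pathfinish c2 = g t" "path_image c2 = g ` ({t..1} \<union> {0..s})"
    "path_image c1 \<inter> path_image c2 = {g s, g t}"
proof
  let ?h = "shiftpath s g"
  have "t - s < 1"
  proof (rule ccontr)
    assume "\<not> t - s < 1"
    then have "s = 0" "t = 1" using st by auto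
    then show False using st g(2) by (simp add: pathstart_def pathfinish_def)
  qed
  show img1: "path_image (subpath s t g) = g ` {s..t}"
    using st by (simp add: path_image_subpath)
  show "simple_path (subpath s t g)"
    using st g(1) by (simp add: simple_path_subpath)
  show "pathstart (subpath s t g) = g s" "pathfinish (subpath s t g) = g t"
    by simp_all
  show "simple_path (subpath 1 (t - s) ?h)"
    using st \<open>t - s < 1\<close> by (intro simple_path_subpath simple_path_shiftpath g) auto
  show "pathstart (subpath 1 (t - s) ?h) = g s"
    using pathfinish_shiftpath[OF st(1) g(2)] by (simp add: pathfinish_def)
  show "pathfinish (subpath 1 (t - s) ?h) = g t"
    using st by (simp add: shiftpath_def)
  show img2: "path_image (subpath 1 (t - s) ?h) = g ` ({t..1} \<union> {0..s})"
    using st \<open>t - s < 1\<close> by (simp add: path_image_subpath image_shiftpath_atLeastAtMost g(2))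
  have "g ` {s..t} \<inter> g ` ({t..1} \<union> {0..s}) \<subseteq> {g s, g t}"
  proof
    fix z assume "z \<in> g ` {s..t} \<inter> g ` ({t..1} \<union> {0..s})"
    then obtain a b where ab: "a \<in> {s..t}" "b \<in> {t..1} \<union> {0..s}" "z = g a" "g a = g b"
      by force
    then have "a \<in> {0..1}" "b \<in> {0..1}" using st by auto
    then have "a = b \<or> a = 0 \<and> b = 1 \<or> a = 1 \<and> b = 0"
      using g(1) ab(4) unfolding simple_path_def loop_free_def by blast
    then have "a = s \<or> a = t" using ab st by auto
    then show "z \<in> {g s, g t}" using ab(3) by auto
  qed
  moreover have "{g s, g t} \<subseteq> g ` {s..t} \<inter> g ` ({t..1} \<union> {0..s})"
    using st by auto
  ultimately show "path_image (subpath s t g) \<inter> path_image (subpath 1 (t - s) ?h) = {g s, g t}"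
    unfolding img1 img2 by (rule subset_antisym)
qed

section \<open>Far points on both sides of an inscribed circle\<close>

lemma arc_farthest_point_off_ends:
  fixes c :: "real \<Rightarrow> 'a::real_normed_vector"
  assumes c: "arc c" and ends: "dist x (pathstart c) = r" "dist x (pathfinish c) = r"
    and "ball x r \<inter> path_image c = {}"
  obtains m where "m \<in> path_image c - {pathstart c, pathfinish c}"
    "\<And>y. y \<in> path_image c \<Longrightarrow> dist x y \<le> dist x m"
proof -
  obtain m0 where m0: "m0 \<in> path_image c" "\<And>y. y \<in> path_image c \<Longrightarrow> dist x y \<le> dist x m0"
    using continuous_attains_sup[OF compact_path_image[OF arc_imp_path[OF c]] _
        continuous_on_dist[OF continuous_on_const continuous_on_id]]
    by blast
  show ?thesis
  proof (cases "m0 \<in> {pathstart c, pathfinish c}")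
    case True
    then have "dist x m0 = r" using ends by auto
    obtain m where m: "m \<in> path_image c - {pathstart c, pathfinish c}"
      using arc_image_diff_ends_nonempty[OF c] by blast
    then have "dist x m = dist x m0"
      using m0(2)[of m] \<open>dist x m0 = r\<close> assms(4) by force
    then show ?thesis using that m m0(2) by simp
  qed (use that m0 in auto)
qed

lemma theta_curve_far_point:
  fixes c1 c2 \<alpha> :: "real \<Rightarrow> complex"
  assumes c1: "simple_path c1" "pathstart c1 = p" "pathfinish c1 = q"
    and c2: "simple_path c2" "pathstart c2 = p" "pathfinish c2 = q"
    and \<alpha>: "simple_path \<alpha>" "pathstart \<alpha> = p" "pathfinish \<alpha> = q"
    and pq: "p \<noteq> q"
    and c1c2: "path_image c1 \<inter> path_image c2 = {p, q}"
    and c1\<alpha>: "path_image c1 \<inter> path_image \<alpha> = {p, q}"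
    and c2\<alpha>: "path_image c2 \<inter> path_image \<alpha> = {p, q}"
    and \<alpha>_sphere: "path_image \<alpha> \<subseteq> sphere x r"
    and r: "0 < r" and ball: "ball x r \<subseteq> inside (path_image c1 \<union> path_image c2)"
    and curv: "\<forall>m\<in>path_image c1. interior_ball_condition R (inside (path_image c1 \<union> path_image c2)) m"
  shows "\<exists>y\<in>path_image c1. R \<le> dist x y"
proof (rule ccontr)
  assume "\<not> (\<exists>y\<in>path_image c1. R \<le> dist x y)"
  then have near: "\<And>y. y \<in> path_image c1 \<Longrightarrow> dist x y < R" by force
  define I where "I = inside (path_image c1 \<union> path_image c2)"
  define W1 where "W1 = inside (path_image c1 \<union> path_image \<alpha>)"
  define W2 where "W2 = inside (path_image c2 \<union> path_image \<alpha>)"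
  have closed: "closed (path_image c1 \<union> path_image c2)" "closed (path_image c2 \<union> path_image \<alpha>)"
    using c1 c2 \<alpha> by (auto intro!: closed_Un closed_path_image simple_path_imp_path)
  have I_curve: "I \<inter> (path_image c1 \<union> path_image c2) = {}"
    by (simp add: I_def)
  have "path_image \<alpha> - {p, q} \<subseteq> cball x r - (path_image c1 \<union> path_image c2)"
    using \<alpha>_sphere c1\<alpha> c2\<alpha> by auto
  then have "path_image \<alpha> - {p, q} \<subseteq> I"
    using cball_diff_subset_inside[OF closed(1) r ball] by (auto simp: I_def)
  moreover have "path_image \<alpha> - {p, q} \<noteq> {}"
    using arc_image_diff_ends_nonempty[of \<alpha>] \<alpha> pq by (simp add: arc_simple_path)
  ultimately have "path_image \<alpha> \<inter> I \<noteq> {}" by blast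
  then have I_split: "W1 \<union> W2 \<union> (path_image \<alpha> - {p, q}) = I"
    using split_inside_simple_closed_curve[OF c1 c2 \<alpha> pq c1c2 c1\<alpha> c2\<alpha>]
    unfolding W1_def W2_def I_def by blast
  have "arc c1" using c1 pq by (simp add: arc_simple_path)
  have pq_r: "dist x p = r" "dist x q = r"
    using \<alpha> \<alpha>_sphere by (auto simp flip: \<alpha>(2,3))
  have "ball x r \<inter> path_image c1 = {}"
    using ball I_curve unfolding I_def by blast
  then obtain m where m: "m \<in> path_image c1 - {p, q}"
      and farthest: "\<And>y. y \<in> path_image c1 \<Longrightarrow> dist x y \<le> dist x m"
    using arc_farthest_point_off_ends[OF \<open>arc c1\<close>, of x r] pq_r unfolding c1(2,3) by blast
  define \<rho> where "\<rho> = dist x m"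
  have \<rho>: "r \<le> \<rho>" "\<rho> < R"
    using farthest[of p] pq_r near m c1(2) by (auto simp: \<rho>_def)
  have "W1 \<subseteq> cball x \<rho>"
    unfolding W1_def using farthest \<alpha>_sphere \<rho>(1)
    by (intro inside_subset_convex) (force simp: \<rho>_def)+
  then have "I - cball x \<rho> \<subseteq> W2"
    using I_split \<alpha>_sphere \<rho>(1) by auto
  moreover have "m \<in> closure (I - cball x \<rho>)"
    using curv m \<rho> r by (intro interior_ball_condition_closure_diff_cball) (auto simp: I_def \<rho>_def)
  ultimately have "m \<in> closure W2"
    using closure_mono by blast
  moreover have "m \<notin> W2"
    using I_split I_curve m by blast
  ultimately have "m \<in> frontier W2"
    using closed(2) by (simp add: frontier_def W2_def interior_open open_inside)
  then have "m \<in> path_image c2 \<union> path_image \<alpha>"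
    using frontier_inside_subset[OF closed(2)] by (auto simp: W2_def)
  then show False
    using m c1c2 c1\<alpha> by blast
qed

lemma arc_on_sphere_far_points:
  fixes g \<alpha> :: "real \<Rightarrow> complex"
  assumes g: "simple_path g" "pathfinish g = pathstart g"
    and curv: "\<forall>m\<in>path_image g. interior_ball_condition R (inside (path_image g)) m"
    and r: "0 < r" and ball: "ball x r \<subseteq> inside (path_image g)"
    and st: "0 \<le> s" "s < t" "t \<le> 1"
    and \<alpha>: "arc \<alpha>" "pathstart \<alpha> = g s" "pathfinish \<alpha> = g t"
      "path_image \<alpha> \<subseteq> sphere x r" "path_image \<alpha> \<inter> path_image g = {g s, g t}"
  shows "(\<exists>y\<in>g ` {s..t}. R \<le> dist x y) \<and> (\<exists>y\<in>g ` ({t..1} \<union> {0..s}). R \<le> dist x y)"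
proof -
  have "g s \<noteq> g t" using arc_distinct_ends[OF \<alpha>(1)] \<alpha>(2,3) by simp
  then obtain c1 c2 where
    c1: "simple_path c1" "pathstart c1 = g s" "pathfinish c1 = g t" "path_image c1 = g ` {s..t}" and
    c2: "simple_path c2" "pathstart c2 = g s" "pathfinish c2 = g t" "path_image c2 = g ` ({t..1} \<union> {0..s})" and
    c1c2: "path_image c1 \<inter> path_image c2 = {g s, g t}"
    using closed_simple_path_split[OF g st] by blast
  have "{s..t} \<union> ({t..1} \<union> {0..s}) = {0..1}" using st by auto
  then have "path_image g = g ` ({s..t} \<union> ({t..1} \<union> {0..s}))" by (simp add: path_image_def)
  then have curve: "path_image g = path_image c1 \<union> path_image c2" by (simp add: c1(4) c2(4) image_Un)
  have ends: "g s \<in> path_image c1 \<inter> path_image c2" "g t \<in> path_image c1 \<inter> path_image c2"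
    using c1c2 by auto
  have c\<alpha>: "path_image c1 \<inter> path_image \<alpha> = {g s, g t}" "path_image c2 \<inter> path_image \<alpha> = {g s, g t}"
    using \<alpha>(5) ends unfolding curve by auto
  have "simple_path \<alpha>" using \<alpha>(1) by (rule arc_imp_simple_path)
  have ball': "ball x r \<subseteq> inside (path_image c1 \<union> path_image c2)"
    using ball curve by simp
  have curv': "\<forall>m\<in>path_image c1. interior_ball_condition R (inside (path_image c1 \<union> path_image c2)) m"
    "\<forall>m\<in>path_image c2. interior_ball_condition R (inside (path_image c2 \<union> path_image c1)) m"
    using curv curve by (simp_all add: Un_commute)
  have "\<exists>y\<in>path_image c1. R \<le> dist x y"
    by (rule theta_curve_far_point[OF c1(1-3) c2(1-3) \<open>simple_path \<alpha>\<close> \<alpha>(2,3) \<open>g s \<noteq> g t\<close>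
          c1c2 c\<alpha> \<alpha>(4) r ball' curv'(1)])
  moreover have "\<exists>y\<in>path_image c2. R \<le> dist x y"
    by (rule theta_curve_far_point[OF c2(1-3) c1(1-3) \<open>simple_path \<alpha>\<close> \<alpha>(2,3) \<open>g s \<noteq> g t\<close>
          _ c\<alpha>(2,1) \<alpha>(4) r _ curv'(2)])
      (use c1c2 ball' in \<open>auto simp: Un_commute\<close>)
  ultimately show ?thesis using c1(4) c2(4) by simp
qed

lemma ball_touching_twice_far_points:
  fixes g :: "real \<Rightarrow> complex"
  assumes g: "simple_path g" "pathfinish g = pathstart g"
    and curv: "\<forall>m\<in>path_image g. interior_ball_condition R (inside (path_image g)) m"
    and r: "0 < r" "r < R" and ball: "ball x r \<subseteq> inside (path_image g)"
    and pq: "p \<in> sphere x r \<inter> path_image g" "q \<in> sphere x r \<inter> path_image g" "p \<noteq> q"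
  obtains s t where "0 \<le> s" "s < t" "t \<le> 1" "g s \<in> sphere x r" "g t \<in> sphere x r"
    "\<exists>y\<in>g ` {s..t}. R \<le> dist x y" "\<exists>y\<in>g ` ({t..1} \<union> {0..s}). R \<le> dist x y"
proof -
  obtain w where "w \<in> sphere x r - path_image g"
    using sphere_not_subset_Jordan_curve[OF g r ball curv] by blast
  then obtain \<alpha> where \<alpha>: "arc \<alpha>" "path_image \<alpha> \<subseteq> sphere x r"
      "path_image \<alpha> \<inter> path_image g = {pathstart \<alpha>, pathfinish \<alpha>}"
    using sphere_arc_between_points[OF closed_path_image[OF simple_path_imp_path[OF g(1)]] r(1) pq]
    by blast
  then have ends: "pathstart \<alpha> \<in> path_image g \<inter> sphere x r" "pathfinish \<alpha> \<in> path_image g \<inter> sphere x r"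
    using pathstart_in_path_image pathfinish_in_path_image by blast+
  then obtain a b where ab: "0 \<le> a" "a \<le> 1" "pathstart \<alpha> = g a" "0 \<le> b" "b \<le> 1" "pathfinish \<alpha> = g b"
    by (auto simp: path_image_def)
  have sphere: "g a \<in> sphere x r" "g b \<in> sphere x r" using ends ab(3,6) by auto
  have \<alpha>_g: "path_image \<alpha> \<inter> path_image g = {g a, g b}" using \<alpha>(3) ab(3,6) by simp
  have "a \<noteq> b" using arc_distinct_ends[OF \<alpha>(1)] ab(3,6) by auto
  then consider "a < b" | "b < a" by linarith
  then show ?thesis
  proof cases
    case 1
    from arc_on_sphere_far_points[OF g curv r(1) ball ab(1) 1 ab(5) \<alpha>(1) ab(3,6) \<alpha>(2) \<alpha>_g]
    show ?thesis using that[OF ab(1) 1 ab(5) sphere] by blast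
  next
    case 2
    have "arc (reversepath \<alpha>)" "path_image (reversepath \<alpha>) \<subseteq> sphere x r"
      "path_image (reversepath \<alpha>) \<inter> path_image g = {g b, g a}"
      using \<alpha>(1,2) \<alpha>_g by (auto simp: arc_reversepath path_image_reversepath)
    from arc_on_sphere_far_points[OF g curv r(1) ball ab(4) 2 ab(2) this(1) _ _ this(2,3)]
    show ?thesis using that[OF ab(4) 2 ab(2) sphere(2,1)] ab(3,6) by simp
  qed
qed

section \<open>Nearby points of a closed simple path cut off a small arc\<close>

lemma compact_continuous_pos_bounded_below:
  fixes f :: "'a::topological_space \<Rightarrow> real"
  assumes "compact K" "continuous_on K f" "\<And>z. z \<in> K \<Longrightarrow> 0 < f z"
  obtains \<eta> where "0 < \<eta>" "\<And>z. z \<in> K \<Longrightarrow> \<eta> \<le> f z"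
proof (cases "K = {}")
  case False
  then obtain z0 where "z0 \<in> K" "\<And>z. z \<in> K \<Longrightarrow> f z0 \<le> f z"
    using continuous_attains_inf[OF assms(1) _ assms(2)] by blast
  then show ?thesis using that[of "f z0"] assms(3) by blast
qed (use that[of 1] in simp)

lemma closed_path_short_parameter_arc:
  fixes g :: "real \<Rightarrow> 'a::metric_space"
  assumes g: "path g" "pathfinish g = pathstart g" and \<delta>: "0 < \<delta>"
  obtains \<tau> where "0 < \<tau>"
    "\<And>s t. \<lbrakk>0 \<le> s; s \<le> t; t \<le> 1; t - s < \<tau> \<or> 1 - (t - s) < \<tau>\<rbrakk> \<Longrightarrow>
       g ` {s..t} \<subseteq> ball (g s) \<delta> \<or> g ` ({t..1} \<union> {0..s}) \<subseteq> ball (g s) \<delta>"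
proof -
  have cont: "continuous_on {0..1} g" using g(1) by (simp add: path_def)
  then obtain \<tau> where \<tau>: "0 < \<tau>"
    "\<And>u v. \<lbrakk>u \<in> {0..1}; v \<in> {0..1}; dist v u < \<tau>\<rbrakk> \<Longrightarrow> dist (g v) (g u) < \<delta> / 2"
    using compact_uniformly_continuous[OF cont compact_Icc] \<delta>
    unfolding uniformly_continuous_on_def by (metis half_gt_zero)
  have g10: "g 1 = g 0" using g(2) by (simp add: pathstart_def pathfinish_def)
  have "g ` {s..t} \<subseteq> ball (g s) \<delta> \<or> g ` ({t..1} \<union> {0..s}) \<subseteq> ball (g s) \<delta>"
    if st: "0 \<le> s" "s \<le> t" "t \<le> 1" and "t - s < \<tau> \<or> 1 - (t - s) < \<tau>" for s t
    using that(4)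
  proof
    assume "t - s < \<tau>"
    then have "dist (g s) (g v) < \<delta>" if "v \<in> {s..t}" for v
      using \<tau>(2)[of s v] that st \<delta> by (auto simp: dist_real_def dist_commute)
    then show ?thesis by auto
  next
    assume gap: "1 - (t - s) < \<tau>"
    have "dist (g s) (g v) < \<delta>" if v: "v \<in> {t..1} \<union> {0..s}" for v
    proof (cases "v \<le> s")
      case True
      then show ?thesis using \<tau>(2)[of s v] v st gap \<delta> by (auto simp: dist_real_def dist_commute)
    next
      case False
      then have "dist (g v) (g 1) < \<delta> / 2" "dist (g s) (g 0) < \<delta> / 2"
        using \<tau>(2)[of 1 v] \<tau>(2)[of 0 s] v st gap by (auto simp: dist_real_def)
      then show ?thesis
        using g10 dist_triangle_less_add[of "g s" "g 0" "\<delta> / 2" "g v" "\<delta> / 2"] by (simp add: dist_commute)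
    qed
    then show ?thesis by auto
  qed
  then show ?thesis by (rule that[OF \<tau>(1)])
qed

lemma closed_simple_path_short_arc:
  fixes g :: "real \<Rightarrow> 'a::metric_space"
  assumes g: "simple_path g" "pathfinish g = pathstart g" and \<delta>: "0 < \<delta>"
  obtains \<eta> where "0 < \<eta>"
    "\<And>s t. \<lbrakk>0 \<le> s; s \<le> t; t \<le> 1; dist (g s) (g t) < \<eta>\<rbrakk> \<Longrightarrow>
       g ` {s..t} \<subseteq> ball (g s) \<delta> \<or> g ` ({t..1} \<union> {0..s}) \<subseteq> ball (g s) \<delta>"
proof -
  obtain \<tau> where \<tau>: "0 < \<tau>" and short:
    "\<And>s t. \<lbrakk>0 \<le> s; s \<le> t; t \<le> 1; t - s < \<tau> \<or> 1 - (t - s) < \<tau>\<rbrakk> \<Longrightarrow>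
       g ` {s..t} \<subseteq> ball (g s) \<delta> \<or> g ` ({t..1} \<union> {0..s}) \<subseteq> ball (g s) \<delta>"
    by (rule closed_path_short_parameter_arc[OF simple_path_imp_path[OF g(1)] g(2) \<delta>]) (rule that)
  define K where "K = ({0..1} \<times> {0..1}) \<inter> {z. \<tau> \<le> snd z - fst z \<and> \<tau> \<le> 1 - (snd z - fst z)}"
  have K_compact: "compact K"
    unfolding K_def
    by (intro compact_Int_closed closed_Collect_conj closed_Collect_le compact_Times compact_Icc continuous_intros)
  have cont: "continuous_on {0..1} g" using simple_path_imp_path[OF g(1)] by (simp add: path_def)
  have K_cont: "continuous_on K (\<lambda>z. dist (g (fst z)) (g (snd z)))"
    unfolding K_def by (intro continuous_on_dist continuous_on_compose2[OF cont] continuous_intros) auto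
  have K_pos: "0 < dist (g (fst z)) (g (snd z))" if "z \<in> K" for z
  proof -
    have "fst z \<in> {0..1}" "snd z \<in> {0..1}" "fst z < snd z" "snd z - fst z < 1"
      using that \<tau> by (auto simp: K_def)
    then show ?thesis
      using g(1) unfolding simple_path_def loop_free_def by fastforce
  qed
  obtain \<eta> where \<eta>: "0 < \<eta>" "\<And>z. z \<in> K \<Longrightarrow> \<eta> \<le> dist (g (fst z)) (g (snd z))"
    using compact_continuous_pos_bounded_below[OF K_compact K_cont K_pos] by blast
  show ?thesis
  proof (rule that[OF \<eta>(1)])
    fix s t assume st: "0 \<le> s" "s \<le> t" "t \<le> 1" "dist (g s) (g t) < \<eta>"
    then have "(s, t) \<notin> K" using \<eta>(2)[of "(s, t)"] by force
    then have "t - s < \<tau> \<or> 1 - (t - s) < \<tau>" using st by (auto simp: K_def)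
    then show "g ` {s..t} \<subseteq> ball (g s) \<delta> \<or> g ` ({t..1} \<union> {0..s}) \<subseteq> ball (g s) \<delta>"
      using short st by blast
  qed
qed

lemma inscribed_ball_touching_twice_radius_bound:
  fixes g :: "real \<Rightarrow> complex"
  assumes g: "simple_path g" "pathfinish g = pathstart g" and R: "0 < R"
    and curv: "\<forall>m\<in>path_image g. interior_ball_condition R (inside (path_image g)) m"
  obtains \<eta> where "0 < \<eta>"
    "\<And>x r p q. \<lbrakk>0 < r; ball x r \<subseteq> inside (path_image g);
        p \<in> sphere x r \<inter> path_image g; q \<in> sphere x r \<inter> path_image g; p \<noteq> q\<rbrakk> \<Longrightarrow> \<eta> \<le> r"
proof -
  obtain \<eta> where \<eta>: "0 < \<eta>" and short_arc: "\<And>s t. \<lbrakk>0 \<le> s; s \<le> t; t \<le> 1; dist (g s) (g t) < \<eta>\<rbrakk> \<Longrightarrow>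
      g ` {s..t} \<subseteq> ball (g s) (R/2) \<or> g ` ({t..1} \<union> {0..s}) \<subseteq> ball (g s) (R/2)"
    by (rule closed_simple_path_short_arc[OF g half_gt_zero[OF R]]) (rule that)
  have "min (R/2) (\<eta>/2) \<le> r"
    if r: "0 < r" and ball: "ball x r \<subseteq> inside (path_image g)"
      and pq: "p \<in> sphere x r \<inter> path_image g" "q \<in> sphere x r \<inter> path_image g" "p \<noteq> q" for x r p q
  proof (rule ccontr)
    assume "\<not> min (R/2) (\<eta>/2) \<le> r"
    then have small: "r < R/2" "2 * r < \<eta>" by auto
    then have "r < R" using R by linarith
    obtain s t where st: "0 \<le> s" "s < t" "t \<le> 1" "g s \<in> sphere x r" "g t \<in> sphere x r"
        and far: "\<exists>y\<in>g ` {s..t}. R \<le> dist x y" "\<exists>y\<in>g ` ({t..1} \<union> {0..s}). R \<le> dist x y"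
      using ball_touching_twice_far_points[OF g curv r \<open>r < R\<close> ball pq] by auto
    have "dist (g s) (g t) \<le> 2 * r"
      using dist_triangle[of "g s" "g t" x] st(4,5) by (simp add: dist_commute)
    then have "g ` {s..t} \<subseteq> ball (g s) (R/2) \<or> g ` ({t..1} \<union> {0..s}) \<subseteq> ball (g s) (R/2)"
      using short_arc st(1-3) small by simp
    moreover have "ball (g s) (R/2) \<subseteq> ball x R"
    proof
      fix y assume "y \<in> ball (g s) (R/2)"
      then show "y \<in> ball x R" using dist_triangle[of x y "g s"] st(4) small by simp
    qed
    ultimately show False
      using far by fastforce
  qed
  moreover have "0 < min (R/2) (\<eta>/2)" using R \<eta> by simp
  ultimately show ?thesis using that by blast
qed

theorem lemma5:
  fixes g :: "real \<Rightarrow> complex"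
  assumes "jordan_curve g" and "bounded_convex_curvature g"
  shows "\<exists>\<eta>>0. \<forall>x r. r > 0 \<longrightarrow> ball x r \<subseteq> Int_curve g \<longrightarrow>
           (\<exists>p q. p \<noteq> q \<and> p \<in> frontier (ball x r) \<inter> path_image g
                        \<and> q \<in> frontier (ball x r) \<inter> path_image g) \<longrightarrow> r \<ge> \<eta>"
proof -
  have g: "simple_path g" "pathfinish g = pathstart g"
    using assms(1) by (auto simp: jordan_curve_def)
  have curv: "\<forall>m\<in>path_image g. interior_ball_condition 1 (inside (path_image g)) m"
    using assms(2) by (simp add: bounded_convex_curvature_iff)
  obtain \<eta> where "0 < \<eta>" and bound: "\<And>x r p q. \<lbrakk>0 < r; ball x r \<subseteq> inside (path_image g);
      p \<in> sphere x r \<inter> path_image g; q \<in> sphere x r \<inter> path_image g; p \<noteq> q\<rbrakk> \<Longrightarrow> \<eta> \<le> r"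
    by (rule inscribed_ball_touching_twice_radius_bound[OF g zero_less_one curv]) (rule that)
  then show ?thesis
    by (intro exI[of _ \<eta>]) (auto simp: Int_curve_def frontier_ball)
qed

end
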